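(* Let $r\in\{2,-2,-3,12,-12\}$ and let $v$ be an integer such that all prime factors of $v$ are congruent to: $\pm1\bmod 8$ if $r=2$; $\pm1\bmod 12$ if $r=12$, and moreover $v^2\equiv25\bmod 32$ if $r=12$; $1$ or $3\bmod 8$ if $r=-2$; $1\bmod3$ if $r=-3$; $1\bmod 3$ if $r=-12$. Assume moreover $v\neq\pm1$ when $r=-2,-3$. Let $\mathcal U$ be the scheme over $\mathbb Z$ defined by $x^2+y^2+z^2-xyz=4+rv^2$, $U=\mathcal U\times_{\mathbb Z}\mathbb Q$, and $B=(x^2-4,r)=(y^2-4,r)=(z^2-4,r)\in\mathrm{Br}_1(U)$. Then $\mathcal U(A_{\mathbb Z})^B=\emptyset$.
   Context: $(a,r)$ is the quaternion algebra class. $\mathcal U(A_{\mathbb Z})=U(\mathbb R)\times\prod_p\mathcal U(\mathbb Z_p)$ and $\mathcal U(A_{\mathbb Z})^B$ is the set of $(M_v)_v\in\mathcal U(A_{\mathbb Z})$ with $\sum_v\mathrm{inv}_v(B(M_v))=0\in\mathbb Q/\mathbb Z$. *)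

theory Defs
  imports Complex_Main "HOL-Number_Theory.Number_Theory"
begin

text \<open>An element of Z_p is represented by its sequence of residues a n mod p^n,
  with 0 \<le> a n < p^n and a (n+1) reducing to a n.\<close>
definition Zp :: "nat \<Rightarrow> (nat \<Rightarrow> int) \<Rightarrow> bool" where
  "Zp p a \<longleftrightarrow> (\<forall>n. 0 \<le> a n \<and> a n < int p ^ n \<and> a (Suc n) mod (int p ^ n) = a n)"

definition Zp_is_zero :: "nat \<Rightarrow> (nat \<Rightarrow> int) \<Rightarrow> bool" where
  "Zp_is_zero p f \<longleftrightarrow> (\<forall>n. [f n = 0] (mod (int p ^ n)))"

text \<open>Hilbert symbol (a,r)_p = 1 for a nonzero a in Z_p (given by residues f) and r in Z:
  a X^2 + r Y^2 = Z^2 has a nontrivial solution in Q_p, equivalently a primitive one in Z_p.\<close>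
definition hilbert_trivial_p :: "nat \<Rightarrow> (nat \<Rightarrow> int) \<Rightarrow> int \<Rightarrow> bool" where
  "hilbert_trivial_p p f r \<longleftrightarrow>
     (\<exists>X Y Z. Zp p X \<and> Zp p Y \<and> Zp p Z \<and>
        \<not> (int p dvd X 1 \<and> int p dvd Y 1 \<and> int p dvd Z 1) \<and>
        (\<forall>n. [f n * (X n)^2 + r * (Y n)^2 = (Z n)^2] (mod (int p ^ n))))"

definition hilbert_trivial_R :: "real \<Rightarrow> int \<Rightarrow> bool" where
  "hilbert_trivial_R a r \<longleftrightarrow>
     (\<exists>X Y Z::real. (X, Y, Z) \<noteq> (0, 0, 0) \<and> a * X^2 + of_int r * Y^2 = Z^2)"

type_synonym Zp_triple = "(nat \<Rightarrow> int) \<times> (nat \<Rightarrow> int) \<times> (nat \<Rightarrow> int)"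

definition U_Zp_point :: "nat \<Rightarrow> int \<Rightarrow> int \<Rightarrow> Zp_triple \<Rightarrow> bool" where
  "U_Zp_point p r v P \<longleftrightarrow> (case P of (x, y, z) \<Rightarrow>
     Zp p x \<and> Zp p y \<and> Zp p z \<and>
     (\<forall>n. [(x n)^2 + (y n)^2 + (z n)^2 - x n * y n * z n = 4 + r * v^2] (mod (int p ^ n))))"

definition U_R_point :: "int \<Rightarrow> int \<Rightarrow> real \<times> real \<times> real \<Rightarrow> bool" where
  "U_R_point r v P \<longleftrightarrow> (case P of (x, y, z) \<Rightarrow>
     x^2 + y^2 + z^2 - x * y * z = 4 + of_int r * (of_int v)^2)"

text \<open>B = (x^2-4,r) = (y^2-4,r) = (z^2-4,r); evaluate using the first of these
  representatives whose first slot is nonzero at the point.\<close>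
definition B_arg_p :: "nat \<Rightarrow> Zp_triple \<Rightarrow> nat \<Rightarrow> int" where
  "B_arg_p p P = (case P of (x, y, z) \<Rightarrow>
     (let fx = (\<lambda>n. (x n)^2 - 4); fy = (\<lambda>n. (y n)^2 - 4); fz = (\<lambda>n. (z n)^2 - 4)
      in if \<not> Zp_is_zero p fx then fx else if \<not> Zp_is_zero p fy then fy else fz))"

definition B_arg_R :: "real \<times> real \<times> real \<Rightarrow> real" where
  "B_arg_R P = (case P of (x, y, z) \<Rightarrow>
     (if x^2 - 4 \<noteq> 0 then x^2 - 4 else if y^2 - 4 \<noteq> 0 then y^2 - 4 else z^2 - 4))"

text \<open>Local invariants inv_v(B(M_v)) in Q/Z, represented by 0 or 1/2 in Q.\<close>
definition inv_p :: "int \<Rightarrow> nat \<Rightarrow> Zp_triple \<Rightarrow> rat" where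
  "inv_p r p P = (if hilbert_trivial_p p (B_arg_p p P) r then 0 else 1/2)"

definition inv_R :: "int \<Rightarrow> real \<times> real \<times> real \<Rightarrow> rat" where
  "inv_R r P = (if hilbert_trivial_R (B_arg_R P) r then 0 else 1/2)"

text \<open>U(A_Z)^B: adelic points (real point, and a Z_p-point for every prime p) whose
  sum of local invariants is defined (finitely many nonzero) and is 0 in Q/Z.\<close>
definition adelic_points_B :: "int \<Rightarrow> int \<Rightarrow> ((real \<times> real \<times> real) \<times> (nat \<Rightarrow> Zp_triple)) set" where
  "adelic_points_B r v = {(Pinf, Pf).
     U_R_point r v Pinf \<and> (\<forall>p. prime p \<longrightarrow> U_Zp_point p r v (Pf p)) \<and>
     finite {p. prime p \<and> inv_p r p (Pf p) \<noteq> 0} \<and>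
     inv_R r Pinf + (\<Sum>p\<in>{p. prime p \<and> inv_p r p (Pf p) \<noteq> 0}. inv_p r p (Pf p)) \<in> \<int>}"

end

theory Submission
  imports Defs
begin

text \<open>
  The local invariant of B = (x^2 - 4, r) at a point is 0 or 1/2 according as the conic
  (x^2 - 4) X^2 + r Y^2 = Z^2 has a nontrivial local solution or not; by compactness (Koenig's
  lemma) this is decided by primitive solutions modulo the powers p^n. The invariant vanishes
  at every place except q = 2 (for r = \<plusminus>2) resp. q = 3 (otherwise), where it is constantly
  1/2, so the invariants of an adelic point always sum to 1/2.

  At the real place 4 + r v^2 < 0 when r < 0, which forces x^2 > 4. At an odd prime p not
  dividing r, either x^2 - 4 is a unit, and a X^2 + r Y^2 = 1 is solvable by counting and lifts
  by Hensel's lemma, or x = \<plusminus>2 mod p, and then the equation of the surface makes r v^2,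
  hence r, a square mod p when p does not divide v; when p divides v, r is a square mod p by
  the congruence hypothesis and quadratic reciprocity. At p = 2 (for r = -3, 12, -12) some coordinate
  is odd, and the identity (x^2 - 4)(z^2 - 4) = (2y - xz)^2 - 4 (x^2 + y^2 + z^2 - xyz - 4)
  exhibits x^2 - 4 as a norm from Q_2(sqrt r) up to a unit norm. At q, a finite computation
  modulo 32 resp. 9 shows that the conic has only imprimitive solutions at every point.
\<close>

lemma cong_square_mod_even:
  fixes x m :: int
  assumes "even m"
  shows "[(x mod m)^2 = x^2] (mod 2 * m)"
proof -
  obtain k where m: "m = 2 * k" using assms by blast
  define q s where "q = x div m" and "s = x mod m"
  have "x = m * q + s" unfolding q_def s_def by simp
  hence "x^2 - s^2 = (2 * m) * (q * (k * q + s))" by (simp add: m power2_eq_square algebra_simps)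
  hence "[x^2 = s^2] (mod 2 * m)" by (simp add: cong_iff_dvd_diff)
  thus ?thesis unfolding s_def by (rule cong_sym)
qed

lemma odd_square_cong_1_mod_8:
  fixes v :: int
  assumes "odd v"
  shows "[v^2 = 1] (mod 8)"
proof -
  obtain k where k: "v = 2 * k + 1" using assms oddE by blast
  obtain j where "k * (k + 1) = 2 * j" by (metis even_mult_iff even_plus_one_iff evenE)
  hence "v^2 = 1 + 8 * j" unfolding k by (simp add: power2_eq_square algebra_simps)
  thus ?thesis by (metis cong_iff_lin cong_sym)
qed

lemma square_root_mod_power_of_two:
  fixes c :: int
  assumes "[c = 1] (mod 8)"
  shows "\<exists>z. [z^2 = c] (mod 2^n)"
proof -
  have "\<exists>z. odd z \<and> [z^2 = c] (mod 2^n)" if "n \<ge> 3" for n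
    using that
  proof (induction n rule: dec_induct)
    case base
    show ?case using assms by (intro exI[of _ 1]) (simp add: cong_sym)
  next
    case (step n)
    then obtain z k where z: "odd z" and k: "z^2 = c + 2^n * k"
      by (metis cong_iff_lin cong_sym)
    show ?case
    proof (cases "even k")
      case True
      then obtain j where "k = 2 * j" by blast
      hence "z^2 = c + 2^Suc n * j" using k by simp
      thus ?thesis using z by (metis cong_iff_lin cong_sym)
    next
      case False
      \<comment> \<open>correct z by 2^(n-1): its square changes by 2^n z modulo 2^(n+1)\<close>
      obtain j where j: "k = 2 * j - z" using False z
        by (metis odd_add evenE add_diff_cancel_right')
      obtain m where m: "n = m + 3" using step(1) by (metis add.commute le_Suc_ex)
      have "(z + 2^(n-1))^2 = c + 2^Suc n * (j + 2^m)"
        using k unfolding j m by (simp add: power2_eq_square power_add algebra_simps)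
      moreover have "odd (z + 2^(n-1))" using z m by simp
      ultimately show ?thesis by (metis cong_iff_lin cong_sym)
    qed
  qed
  then obtain z where "[z^2 = c] (mod 2^max n 3)" by (metis max.cobounded2)
  moreover have "(2::int)^n dvd 2^max n 3" by (simp add: le_imp_power_dvd)
  ultimately show ?thesis using cong_dvd_modulus by blast
qed

lemma square_root_mod_prime_power:
  fixes p c z0 :: int
  assumes p: "prime p" "odd p" and z0: "[z0^2 = c] (mod p)" and c: "\<not> p dvd c"
  shows "\<exists>z. [z^2 = c] (mod p^n)"
proof -
  have "\<exists>z. \<not> p dvd z \<and> [z^2 = c] (mod p^n)" if "n \<ge> 1" for n
    using that
  proof (induction n rule: dec_induct)
    case base
    have "\<not> p dvd z0"
    proof
      assume "p dvd z0"
      hence "p dvd z0^2" by (simp add: power2_eq_square)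
      thus False using z0 c by (simp add: cong_dvd_iff)
    qed
    thus ?case using z0 by auto
  next
    case (step n)
    then obtain z k where z: "\<not> p dvd z" and k: "z^2 = c + p^n * k"
      by (metis cong_iff_lin cong_sym)
    have "\<not> p dvd 2" using p primes_dvd_imp_eq[of p 2] by auto
    hence "coprime (2 * z) p"
      using p z by (metis coprime_commute prime_imp_coprime prime_dvd_mult_iff)
    then obtain u where u: "[(2 * z) * u = 1] (mod p)" using cong_solve_coprime_int by blast
    \<comment> \<open>Newton step: z + t p^n with 2 z t = -k modulo p\<close>
    define t where "t = - k * u"
    have "k + 2 * z * t = k * (1 - (2 * z) * u)" by (simp add: t_def algebra_simps)
    also have "[\<dots> = k * (1 - 1)] (mod p)" by (intro cong_mult cong_diff cong_refl u)
    finally obtain j where j: "k + 2 * z * t = p * j" by (auto simp: cong_0_iff dvd_def)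
    have pn: "p^n = p * p^(n-1)" using step(1) by (simp add: power_eq_if)
    have "(z + t * p^n)^2 = c + p^n * (k + 2 * z * t) + t^2 * p^n * p^n"
      using k by (simp add: power2_eq_square algebra_simps)
    also have "\<dots> = c + p^Suc n * (j + t^2 * p^(n-1))" using j pn by (simp add: algebra_simps)
    finally have "[(z + t * p^n)^2 = c] (mod p^Suc n)" by (metis cong_iff_lin cong_sym)
    moreover have "\<not> p dvd z + t * p^n" using z pn by (simp add: dvd_add_left_iff)
    ultimately show ?case by blast
  qed
  then obtain z where "[z^2 = c] (mod p^max n 1)" by (metis max.cobounded2)
  moreover have "p^n dvd p^max n 1" by (simp add: le_imp_power_dvd)
  ultimately show ?thesis using cong_dvd_modulus by blast
qed

lemma inj_on_shifted_square_mod_prime: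
  fixes p b c :: int
  assumes p: "prime p" and c: "\<not> p dvd c"
  shows "inj_on (\<lambda>x. (b + c * x^2) mod p) {0..(p - 1) div 2}"
proof (rule inj_onI)
  fix x y assume x: "x \<in> {0..(p - 1) div 2}" and y: "y \<in> {0..(p - 1) div 2}"
    and "(b + c * x^2) mod p = (b + c * y^2) mod p"
  hence "p dvd c * ((x - y) * (x + y))"
    by (simp add: mod_eq_dvd_iff power2_eq_square algebra_simps)
  hence "p dvd x - y \<or> p dvd x + y" using p c by (simp add: prime_dvd_mult_iff)
  moreover have "\<bar>x - y\<bar> < p" "0 \<le> x + y" "x + y < p" using x y by auto
  ultimately have "x - y = 0 \<or> x + y = 0"
    using dvd_imp_le_int[of "x - y" p] dvd_imp_le_int[of "x + y" p] by force
  thus "x = y" using x y by auto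
qed

lemma diagonal_form_represents_one_mod_prime:
  fixes p a r :: int
  assumes p: "prime p" "odd p" and a: "\<not> p dvd a" and r: "\<not> p dvd r"
  shows "\<exists>X Y. [a * X^2 + r * Y^2 = 1] (mod p)"
proof (rule ccontr)
  assume none: "\<not> ?thesis"
  \<comment> \<open>pigeonhole: the (p+1)/2 values of a X^2 and of 1 - r Y^2 modulo p must meet\<close>
  define H where "H = {0..(p - 1) div 2}"
  define S1 where "S1 = (\<lambda>x. (a * x^2) mod p) ` H"
  define S2 where "S2 = (\<lambda>y. (1 - r * y^2) mod p) ` H"
  have "p > 1" using p(1) prime_gt_1_int by blast
  have card_S1: "card S1 = card H" unfolding S1_def H_def
    by (rule card_image) (use inj_on_shifted_square_mod_prime[OF p(1) a, of 0] in simp)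
  have card_S2: "card S2 = card H" unfolding S2_def H_def
    by (rule card_image) (use inj_on_shifted_square_mod_prime[OF p(1), of "-r" 1] r in simp)
  have card_H: "card H = nat ((p + 1) div 2)" unfolding H_def using \<open>p > 1\<close> by simp
  have "S1 \<inter> S2 = {}"
  proof -
    have "(a * x^2) mod p \<noteq> (1 - r * y^2) mod p" for x y
      using none by (metis cong_def cong_add_rcancel diff_add_cancel)
    thus ?thesis unfolding S1_def S2_def by auto
  qed
  moreover have "S1 \<union> S2 \<subseteq> {0..<p}" unfolding S1_def S2_def using \<open>p > 1\<close> by auto
  moreover have "finite S1" "finite S2" unfolding S1_def S2_def H_def by auto
  ultimately have "card S1 + card S2 \<le> card {0..<p}"
    by (metis card_Un_disjoint card_mono finite_atLeastLessThan_int)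
  thus False using card_S1 card_S2 card_H p(2) \<open>p > 1\<close> by (auto elim!: oddE)
qed

section \<open>Quadratic residues\<close>

lemma Legendre_eq_if_cong_power:
  assumes p: "prime p" "2 < p" and c: "c \<in> {-1, 0, 1}"
    and "[a ^ ((p - 1) div 2) = c] (mod int p)"
  shows "Legendre a (int p) = c"
proof -
  have "[Legendre a (int p) + 1 = c + 1] (mod int p)"
    using euler_criterion[OF p, of a] assms(4) by (metis cong_add_rcancel cong_trans)
  moreover have "Legendre a (int p) \<in> {-1, 0, 1}" by (auto simp: Legendre_def)
  ultimately show ?thesis
    using c p(2) cong_less_imp_eq_int[of "Legendre a (int p) + 1" "int p" "c + 1"]
    by auto
qed

lemma Legendre_minus_one:
  assumes "prime p" "2 < p"
  shows "Legendre (-1) (int p) = (-1) ^ ((p - 1) div 2)"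
  by (rule Legendre_eq_if_cong_power[OF assms]) (auto simp: minus_one_power_iff)

lemma Legendre_mult:
  assumes p: "prime p" "2 < p"
  shows "Legendre (a * b) (int p) = Legendre a (int p) * Legendre b (int p)"
proof (rule Legendre_eq_if_cong_power[OF p])
  show "Legendre a (int p) * Legendre b (int p) \<in> {-1, 0, 1}" by (auto simp: Legendre_def)
  have "[a ^ ((p - 1) div 2) * b ^ ((p - 1) div 2) = Legendre a (int p) * Legendre b (int p)]
      (mod int p)"
    using euler_criterion[OF p] by (intro cong_mult) (simp_all add: cong_sym)
  thus "[(a * b) ^ ((p - 1) div 2) = Legendre a (int p) * Legendre b (int p)] (mod int p)"
    by (simp add: power_mult_distrib)
qed

lemma Legendre_two:
  assumes p: "prime p" "2 < p"
  defines "h \<equiv> (p - 1) div 2"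
  shows "Legendre 2 (int p) = (-1) ^ (h - h div 2)"
proof -
  interpret G: GAUSS p 2
    by unfold_locales (use p in \<open>auto simp: cong_def\<close>)
  \<comment> \<open>Gauss's lemma: the multiples 2, 4, ..., 2h exceeding p/2 are those 2x with h/2 < x \<le> h\<close>
  have h: "int h = (int p - 1) div 2" unfolding h_def using p by (simp add: zdiv_int of_nat_diff)
  have "G.C = G.B"
  proof -
    have "x mod int p = x" if "x \<in> G.B" for x
      using that p h unfolding G.B_def G.A_def by auto
    thus ?thesis unfolding G.C_def by (simp cong: image_cong)
  qed
  hence "G.E = (\<lambda>x. x * 2) ` {int (h div 2) <.. int h}"
    unfolding G.E_def G.B_def G.A_def h[symmetric] by (auto simp: zdiv_int)
  hence "card G.E = card {int (h div 2) <.. int h}" by (simp add: card_image inj_on_def)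
  also have "\<dots> = h - h div 2" by simp
  finally show ?thesis using G.gauss_lemma by simp
qed

lemma Legendre_three:
  assumes p: "prime p" "3 < p"
  shows "Legendre 3 (int p) = (-1) ^ ((p - 1) div 2) * (if p mod 3 = 1 then 1 else -1)"
proof -
  have "\<not> 3 dvd p" using p primes_dvd_imp_eq[of 3 p] prime_nat_iff'[of 3] by auto
  hence mod3: "int p mod 3 = 1 \<or> int p mod 3 = 2" by presburger
  have "QuadRes 3 (int p) \<longleftrightarrow> int p mod 3 = 1"
  proof
    assume "QuadRes 3 (int p)"
    then obtain y where "[y^2 = int p] (mod 3)" unfolding QuadRes_def by blast
    hence "(y mod 3)^2 mod 3 = int p mod 3" by (simp add: cong_def power_mod)
    moreover have "y mod 3 \<in> {0, 1, 2}" by auto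
    ultimately show "int p mod 3 = 1" using mod3 by auto
  qed (auto simp: QuadRes_def cong_def intro!: exI[of _ 1])
  moreover have "int p mod 3 = 1 \<longleftrightarrow> p mod 3 = 1" by presburger
  ultimately have "Legendre (int p) 3 = (if p mod 3 = 1 then 1 else -1)"
    using mod3 by (auto simp: Legendre_def cong_def)
  moreover have "Legendre (int p) (int 3) * Legendre (int 3) (int p)
      = (-1::int) ^ ((p - 1) div 2 * ((3 - 1) div 2))"
    by (rule Quadratic_Reciprocity) (use p in auto)
  ultimately show ?thesis by (cases "p mod 3 = 1") (simp_all add: minus_equation_iff)
qed

lemma QuadRes_if_Legendre_eq_1: "Legendre a p = 1 \<Longrightarrow> QuadRes p a"
  by (auto simp: Legendre_def split: if_splits)

lemma Legendre_two_eq_1: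
  assumes "prime p" "p mod 8 \<in> {1, 7}"
  shows "Legendre 2 (int p) = 1"
proof -
  obtain k where k: "p = 8 * k + 1 \<or> p = 8 * k + 7"
    using assms(2) by (metis insertE singletonD div_mod_decomp mult.commute)
  hence p: "2 < p" using assms(1) prime_gt_1_nat[of p] by auto
  have "even ((p - 1) div 2 - (p - 1) div 2 div 2)"
    using k by (elim disjE) (simp_all add: algebra_simps, presburger)
  thus ?thesis using Legendre_two[OF assms(1) p] by simp
qed

lemma Legendre_minus_two_eq_1:
  assumes "prime p" "p mod 8 \<in> {1, 3}"
  shows "Legendre (-2) (int p) = 1"
proof -
  obtain k where k: "p = 8 * k + 1 \<or> p = 8 * k + 3"
    using assms(2) by (metis insertE singletonD div_mod_decomp mult.commute)
  hence p: "2 < p" using assms(1) prime_gt_1_nat[of p] by auto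
  have "even ((4 * k + 1) + ((4 * k + 1) - (4 * k + 1) div 2))" by presburger
  hence "even ((p - 1) div 2 + ((p - 1) div 2 - (p - 1) div 2 div 2))" using k by auto
  hence "Legendre (-1) (int p) * Legendre 2 (int p) = 1"
    by (simp add: Legendre_minus_one[OF assms(1) p] Legendre_two[OF assms(1) p] flip: power_add)
  thus ?thesis using Legendre_mult[OF assms(1) p, of "-1" 2] by simp
qed

lemma Legendre_three_eq_1:
  assumes "prime p" "p mod 12 \<in> {1, 11}"
  shows "Legendre 3 (int p) = 1"
proof -
  obtain k where k: "p = 12 * k + 1 \<or> p = 12 * k + 11"
    using assms(2) by (metis insertE singletonD div_mod_decomp mult.commute)
  hence "3 < p" using assms(1) prime_gt_1_nat[of p] by auto
  moreover have "p mod 3 = 1 \<longleftrightarrow> even ((p - 1) div 2)" using k by (auto; presburger)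
  ultimately show ?thesis using Legendre_three[OF assms(1)] by (auto simp: minus_one_power_iff)
qed

lemma Legendre_minus_three_eq_1:
  assumes "prime p" "p mod 3 = 1"
  shows "Legendre (-3) (int p) = 1"
proof -
  have p: "3 < p" using assms(2) prime_gt_1_nat[OF assms(1)] by presburger
  hence "2 < p" by simp
  have "Legendre (-1) (int p) * Legendre 3 (int p) = 1"
    using assms(2) by (simp add: Legendre_minus_one[OF assms(1) \<open>2 < p\<close>]
        Legendre_three[OF assms(1) p] flip: power_add)
  thus ?thesis using Legendre_mult[OF assms(1) \<open>2 < p\<close>, of "-1" 3] by simp
qed

lemma QuadRes_mult_square: "QuadRes p a \<Longrightarrow> QuadRes p (b^2 * a)"
  unfolding QuadRes_def by (metis cong_scalar_left power_mult_distrib)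

lemma int_mod_numeral: "int n mod numeral k = int (n mod numeral k)"
  by (simp add: zmod_int)

definition admissible_prime :: "int \<Rightarrow> int \<Rightarrow> bool" where
  "admissible_prime r p \<longleftrightarrow>
     (r = 2 \<longrightarrow> p mod 8 \<in> {1, 7}) \<and> (r = -2 \<longrightarrow> p mod 8 \<in> {1, 3}) \<and>
     (r = 12 \<longrightarrow> p mod 12 \<in> {1, 11}) \<and> (r \<in> {-3, -12} \<longrightarrow> p mod 3 = 1)"

lemma QuadRes_if_admissible_prime:
  fixes p r :: int
  assumes p: "prime p" and r: "r \<in> {2, -2, -3, 12, -12}" and adm: "admissible_prime r p"
  shows "QuadRes p r"
proof -
  obtain n where n: "p = int n" using prime_ge_0_int[OF p] nonneg_int_cases by blast
  hence "prime n" using p by simp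
  consider "r = 2" | "r = -2" | "r = 12" | "r \<in> {-3, -12}" using r by auto
  thus ?thesis
  proof cases
    case 1
    hence "n mod 8 \<in> {1, 7}" using adm unfolding n admissible_prime_def
      by (simp add: int_mod_numeral)
    thus ?thesis using 1 n Legendre_two_eq_1[OF \<open>prime n\<close>] QuadRes_if_Legendre_eq_1 by simp
  next
    case 2
    hence "n mod 8 \<in> {1, 3}" using adm unfolding n admissible_prime_def
      by (simp add: int_mod_numeral)
    thus ?thesis using 2 n Legendre_minus_two_eq_1[OF \<open>prime n\<close>] QuadRes_if_Legendre_eq_1 by simp
  next
    case 3
    hence "n mod 12 \<in> {1, 11}" using adm unfolding n admissible_prime_def
      by (simp add: int_mod_numeral)
    hence "QuadRes p (2^2 * 3)"
      unfolding n
        by (intro QuadRes_mult_square QuadRes_if_Legendre_eq_1 Legendre_three_eq_1[OF \<open>prime n\<close>])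
    thus ?thesis using 3 by simp
  next
    case 4
    hence "n mod 3 = 1" using adm unfolding n admissible_prime_def by (simp add: int_mod_numeral)
    hence "QuadRes p (-3)"
      unfolding n by (intro QuadRes_if_Legendre_eq_1 Legendre_minus_three_eq_1[OF \<open>prime n\<close>])
    thus ?thesis using 4 QuadRes_mult_square[of p "-3" 2] by auto
  qed
qed

section \<open>Local Hilbert symbols through congruences\<close>

definition hilbert_solvable_mod :: "int \<Rightarrow> nat \<Rightarrow> int \<Rightarrow> int \<Rightarrow> bool" where
  "hilbert_solvable_mod p n a r \<longleftrightarrow>
     (\<exists>X Y Z. \<not> (p dvd X \<and> p dvd Y \<and> p dvd Z) \<and> [a * X^2 + r * Y^2 = Z^2] (mod p^n))"

lemma hilbert_solvable_mod_cong:
  assumes "[a = b] (mod p^n)"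
  shows "hilbert_solvable_mod p n a r \<longleftrightarrow> hilbert_solvable_mod p n b r"
proof -
  have "[a * X^2 + r * Y^2 = b * X^2 + r * Y^2] (mod p^n)" for X Y
    using assms by (intro cong_add cong_mult cong_refl)
  thus ?thesis unfolding hilbert_solvable_mod_def by (meson cong_sym cong_trans)
qed

lemma hilbert_solvable_mod_mono:
  assumes "hilbert_solvable_mod p m a r" "n \<le> m"
  shows "hilbert_solvable_mod p n a r"
  using assms cong_dvd_modulus le_imp_power_dvd unfolding hilbert_solvable_mod_def by meson

lemma not_hilbert_solvable_mod_by_residues:
  fixes p m a r :: int
  assumes m: "0 < m" "p dvd m" and squares: "\<And>X. [(X mod m)^2 = X^2] (mod p^n)"
    and check: "\<forall>X\<in>set [0..m - 1]. \<forall>Y\<in>set [0..m - 1]. \<forall>Z\<in>set [0..m - 1].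
        (a * X^2 + r * Y^2 - Z^2) mod p^n = 0 \<longrightarrow> p dvd X \<and> p dvd Y \<and> p dvd Z"
  shows "\<not> hilbert_solvable_mod p n a r"
proof
  assume "hilbert_solvable_mod p n a r"
  then obtain X Y Z where prim: "\<not> (p dvd X \<and> p dvd Y \<and> p dvd Z)"
    and sol: "[a * X^2 + r * Y^2 = Z^2] (mod p^n)"
    unfolding hilbert_solvable_mod_def by blast
  have "[a * (X mod m)^2 + r * (Y mod m)^2 = a * X^2 + r * Y^2] (mod p^n)"
    by (intro cong_add cong_mult cong_refl squares)
  also note sol
  also have "[Z^2 = (Z mod m)^2] (mod p^n)" by (rule cong_sym[OF squares])
  finally have eq: "(a * (X mod m)^2 + r * (Y mod m)^2 - (Z mod m)^2) mod p^n = 0"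
    by (simp add: cong_iff_dvd_diff dvd_eq_mod_eq_0)
  have residue: "W mod m \<in> set [0..m - 1]" for W using m(1) by simp
  have "p dvd X mod m \<and> p dvd Y mod m \<and> p dvd Z mod m"
    by (rule check[rule_format, OF residue residue residue eq])
  thus False using prim m(2) by (simp add: dvd_mod_iff)
qed

lemma ex_compatible_sequence:
  fixes ok :: "nat \<Rightarrow> 'a \<Rightarrow> bool" and red :: "nat \<Rightarrow> 'a \<Rightarrow> 'a"
  assumes finite: "\<And>n. finite {s. ok n s}"
    and nonempty: "\<And>n. \<exists>s. ok n s"
    and red_ok: "\<And>n m s. n \<le> m \<Longrightarrow> ok m s \<Longrightarrow> ok n (red n s)"
    and red_red: "\<And>n m s. n \<le> m \<Longrightarrow> red n (red m s) = red n s"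
  shows "\<exists>S. \<forall>n. ok n (S n) \<and> red n (S (Suc n)) = S n"
proof -
  \<comment> \<open>Koenig's lemma: follow the elements that lift to every higher level\<close>
  define liftable where "liftable n s \<longleftrightarrow> ok n s \<and> (\<forall>m\<ge>n. \<exists>t. ok m t \<and> red n t = s)" for n s
  have pigeonhole: "\<exists>s\<in>T. liftable n s"
    if T: "finite T" "T \<subseteq> {s. ok n s}" and hits: "\<And>m. m \<ge> n \<Longrightarrow> \<exists>t. ok m t \<and> red n t \<in> T"
    for n T
  proof (rule ccontr)
    assume "\<not> ?thesis"
    hence "\<forall>s\<in>T. \<exists>m\<ge>n. \<forall>t. ok m t \<longrightarrow> red n t \<noteq> s" using T(2) unfolding liftable_def by blast
    then obtain bad where bad: "\<And>s. s \<in> T \<Longrightarrow> n \<le> bad s \<and> (\<forall>t. ok (bad s) t \<longrightarrow> red n t \<noteq> s)"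
      by metis
    define M where "M = Max (insert n (bad ` T))"
    have M: "n \<le> M" "\<And>s. s \<in> T \<Longrightarrow> bad s \<le> M" unfolding M_def using T(1) by auto
    then obtain t where t: "ok M t" "red n t \<in> T" using hits by blast
    let ?s = "red n t"
    have "ok (bad ?s) (red (bad ?s) t)" using red_ok[OF M(2)[OF t(2)] t(1)] .
    moreover have "red n (red (bad ?s) t) = ?s" using red_red bad[OF t(2)] by blast
    ultimately show False using bad[OF t(2)] by blast
  qed
  have "\<exists>s. liftable 0 s"
    using pigeonhole[of "{s. ok 0 s}" 0] finite nonempty red_ok by blast
  moreover have "\<exists>s'. liftable (Suc n) s' \<and> red n s' = s" if "liftable n s" for n s
  proof -
    let ?T = "{s'. ok (Suc n) s' \<and> red n s' = s}"
    have "finite ?T" using finite[of "Suc n"] by (rule finite_subset[rotated]) auto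
    moreover have "\<exists>t. ok m t \<and> red (Suc n) t \<in> ?T" if m: "Suc n \<le> m" for m
    proof -
      obtain t where t: "ok m t" "red n t = s"
        using \<open>liftable n s\<close> m unfolding liftable_def by (meson Suc_leD)
      hence "red (Suc n) t \<in> ?T" using m red_ok red_red[of n "Suc n" t] by simp
      thus ?thesis using t(1) by blast
    qed
    ultimately show ?thesis using pigeonhole[of ?T "Suc n"] by blast
  qed
  ultimately show ?thesis
    using dependent_nat_choice[of liftable "\<lambda>n s s'. red n s' = s"] unfolding liftable_def by blast
qed

definition reduce_mod :: "int \<Rightarrow> int \<times> int \<times> int \<Rightarrow> int \<times> int \<times> int" where
  "reduce_mod q = (\<lambda>(X, Y, Z). (X mod q, Y mod q, Z mod q))"

definition reduced_hilbert_solution :: "nat \<Rightarrow> nat \<Rightarrow> int \<Rightarrow> int \<Rightarrow> int \<times> int \<times> int \<Rightarrow> bool" where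
  "reduced_hilbert_solution p n a r = (\<lambda>(X, Y, Z).
     X \<in> {0..<int p ^ n} \<and> Y \<in> {0..<int p ^ n} \<and> Z \<in> {0..<int p ^ n} \<and>
     (n \<ge> 1 \<longrightarrow> \<not> (int p dvd X \<and> int p dvd Y \<and> int p dvd Z)) \<and>
     [a * X^2 + r * Y^2 = Z^2] (mod int p ^ n))"

lemma reduced_hilbert_solution_reduce_mod:
  assumes p: "prime p" and "n \<le> m" and ab: "[a = b] (mod int p ^ n)"
    and prim: "m \<ge> 1 \<longrightarrow> \<not> (int p dvd X \<and> int p dvd Y \<and> int p dvd Z)"
    and sol: "[b * X^2 + r * Y^2 = Z^2] (mod int p ^ m)"
  shows "reduced_hilbert_solution p n a r (reduce_mod (int p ^ n) (X, Y, Z))"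
proof -
  have "[a * (X mod int p ^ n)^2 + r * (Y mod int p ^ n)^2 = b * X^2 + r * Y^2] (mod int p ^ n)"
    by (intro cong_add cong_mult cong_pow ab cong_refl) simp_all
  also have "[b * X^2 + r * Y^2 = Z^2] (mod int p ^ n)"
    using sol \<open>n \<le> m\<close> by (metis cong_dvd_modulus le_imp_power_dvd)
  also have "[Z^2 = (Z mod int p ^ n)^2] (mod int p ^ n)" by (intro cong_pow) (simp add: cong_sym)
  finally have
    "[a * (X mod int p ^ n)^2 + r * (Y mod int p ^ n)^2 = (Z mod int p ^ n)^2] (mod int p ^ n)" .
  moreover have "int p ^ n > 0" using p prime_gt_0_nat by simp
  moreover have "n \<ge> 1 \<longrightarrow>
      \<not> (int p dvd X mod int p ^ n \<and> int p dvd Y mod int p ^ n \<and> int p dvd Z mod int p ^ n)"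
    using prim \<open>n \<le> m\<close> by (auto simp: dvd_mod_iff dvd_power)
  ultimately show ?thesis by (simp add: reduced_hilbert_solution_def reduce_mod_def)
qed

lemma Zp_mod:
  assumes "Zp p a" "k \<le> n"
  shows "a n mod int p ^ k = a k"
  using assms(2)
proof (induction n rule: dec_induct)
  case base
  thus ?case using assms(1) unfolding Zp_def by simp
next
  case (step n)
  have "a (Suc n) mod int p ^ k = a (Suc n) mod int p ^ n mod int p ^ k"
    using step(1) by (simp add: mod_mod_cancel le_imp_power_dvd)
  thus ?case using assms(1) step(3) unfolding Zp_def by simp
qed

lemma Zp_cong:
  assumes "Zp p a" "k \<le> n"
  shows "[a n = a k] (mod int p ^ k)"
  using Zp_mod[OF assms] Zp_mod[OF assms(1) order_refl] unfolding cong_def by simp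

lemma hilbert_trivial_p_if_solvable_mod:
  assumes p: "prime p"
    and compat: "\<And>n m. n \<le> m \<Longrightarrow> [f m = f n] (mod int p ^ n)"
    and solvable: "\<And>n. N \<le> n \<Longrightarrow> hilbert_solvable_mod (int p) n (f n) r"
  shows "hilbert_trivial_p p f r"
proof -
  let ?ok = "\<lambda>n. reduced_hilbert_solution p n (f n) r" and ?red = "\<lambda>n. reduce_mod (int p ^ n)"
  have "\<exists>S. \<forall>n. ?ok n (S n) \<and> ?red n (S (Suc n)) = S n"
  proof (rule ex_compatible_sequence)
    show "finite {s. ?ok n s}" for n
      by (rule finite_subset[of _ "{0..<int p ^ n} \<times> {0..<int p ^ n} \<times> {0..<int p ^ n}"])
        (auto simp: reduced_hilbert_solution_def)
    show "?ok n (?red n s)" if nm: "n \<le> m" and ok: "?ok m s" for n m s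
    proof (cases s)
      case (fields X Y Z)
      show ?thesis unfolding fields
        by (rule reduced_hilbert_solution_reduce_mod[OF p nm compat[OF nm, THEN cong_sym]])
          (use ok fields in \<open>simp_all add: reduced_hilbert_solution_def\<close>)
    qed
    show "\<exists>s. ?ok n s" for n
    proof -
      obtain X Y Z where "\<not> (int p dvd X \<and> int p dvd Y \<and> int p dvd Z)"
        and "[f (max n N) * X^2 + r * Y^2 = Z^2] (mod int p ^ max n N)"
        using solvable[of "max n N"] unfolding hilbert_solvable_mod_def by auto
      thus ?thesis
        using reduced_hilbert_solution_reduce_mod[OF p max.cobounded1
            compat[OF max.cobounded1, THEN cong_sym]]
        by blast
    qed
    show "?red n (?red m s) = ?red n s" if "n \<le> m" for n m s
      using that by (cases s) (simp add: reduce_mod_def mod_mod_cancel le_imp_power_dvd)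
  qed
  then obtain S where S: "\<And>n. ?ok n (S n)" "\<And>n. ?red n (S (Suc n)) = S n" by blast
  define X Y Z where "X n = fst (S n)" and "Y n = fst (snd (S n))" and "Z n = snd (snd (S n))" for n
  have ok: "?ok n (X n, Y n, Z n)"
    and red: "?red n (X (Suc n), Y (Suc n), Z (Suc n)) = (X n, Y n, Z n)"
    for n using S[of n] unfolding X_def Y_def Z_def by simp_all
  show ?thesis unfolding hilbert_trivial_p_def
  proof (intro exI conjI allI)
    show "Zp p X" "Zp p Y" "Zp p Z"
      using ok red by (auto simp: Zp_def reduced_hilbert_solution_def reduce_mod_def)
    show "\<not> (int p dvd X 1 \<and> int p dvd Y 1 \<and> int p dvd Z 1)"
      using ok[of 1] by (simp add: reduced_hilbert_solution_def)
    show "[f n * (X n)^2 + r * (Y n)^2 = (Z n)^2] (mod int p ^ n)" for n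
      using ok[of n] by (simp add: reduced_hilbert_solution_def)
  qed
qed

lemma not_hilbert_trivial_p_if_not_solvable_mod:
  assumes "1 \<le> N" and unsolvable: "\<not> hilbert_solvable_mod (int p) N (f N) r"
  shows "\<not> hilbert_trivial_p p f r"
proof
  assume "hilbert_trivial_p p f r"
  then obtain X Y Z where Zp: "Zp p X" "Zp p Y" "Zp p Z"
    and prim: "\<not> (int p dvd X 1 \<and> int p dvd Y 1 \<and> int p dvd Z 1)"
    and sol: "[f N * (X N)^2 + r * (Y N)^2 = (Z N)^2] (mod int p ^ N)"
    unfolding hilbert_trivial_p_def by blast
  have "int p dvd W N \<longleftrightarrow> int p dvd W 1" if "Zp p W" for W
    using Zp_mod[OF that \<open>1 \<le> N\<close>] by (metis dvd_mod_iff dvd_refl power_one_right)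
  hence "hilbert_solvable_mod (int p) N (f N) r"
    using Zp prim sol unfolding hilbert_solvable_mod_def by blast
  thus False using unsolvable by contradiction
qed

section \<open>Local invariants of B\<close>

abbreviation markoff_form :: "'a::comm_ring_1 \<Rightarrow> 'a \<Rightarrow> 'a \<Rightarrow> 'a" where
  "markoff_form x y z \<equiv> x^2 + y^2 + z^2 - x * y * z"

lemma markoff_form_mod_cong:
  fixes x y z m :: int
  shows "[markoff_form (x mod m) (y mod m) (z mod m) = markoff_form x y z] (mod m)"
  by (intro cong_add cong_diff cong_mult cong_pow) simp_all

lemma B_arg_p_cases:
  "B_arg_p p (x, y, z) \<in> {\<lambda>n. (x n)^2 - 4, \<lambda>n. (y n)^2 - 4, \<lambda>n. (z n)^2 - 4}"
  unfolding B_arg_p_def Let_def by auto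

lemma inv_p_eq_0:
  assumes p: "prime p" and P: "U_Zp_point p r v P"
    and solvable: "\<And>n x y z. N \<le> n \<Longrightarrow> [markoff_form x y z = 4 + r * v^2] (mod int p ^ n) \<Longrightarrow>
        hilbert_solvable_mod (int p) n (x^2 - 4) r"
  shows "inv_p r p P = 0"
proof -
  obtain x y z where P_eq: "P = (x, y, z)" by (cases P)
  have Zp: "Zp p x" "Zp p y" "Zp p z"
    and E: "\<And>n. [markoff_form (x n) (y n) (z n) = 4 + r * v^2] (mod int p ^ n)"
    using P unfolding P_eq U_Zp_point_def by auto
  have trivial: "hilbert_trivial_p p (\<lambda>n. (t n)^2 - 4) r"
    if t: "Zp p t" and E_t: "\<And>n. \<exists>u w. [markoff_form (t n) u w = 4 + r * v^2] (mod int p ^ n)" for t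
  proof (rule hilbert_trivial_p_if_solvable_mod[OF p, of _ N])
    show "[(t m)^2 - 4 = (t n)^2 - 4] (mod int p ^ n)" if "n \<le> m" for n m
      using Zp_cong[OF t that] by (intro cong_diff cong_pow cong_refl)
    show "hilbert_solvable_mod (int p) n ((t n)^2 - 4) r" if "N \<le> n" for n
      using E_t[of n] solvable[OF that] by blast
  qed
  have E_yxz: "[markoff_form (y n) (x n) (z n) = 4 + r * v^2] (mod int p ^ n)"
    and E_zyx: "[markoff_form (z n) (y n) (x n) = 4 + r * v^2] (mod int p ^ n)" for n
    using E[of n] by (simp_all add: algebra_simps)
  have "hilbert_trivial_p p (\<lambda>n. (x n)^2 - 4) r" by (rule trivial[OF Zp(1)]) (use E in blast)
  moreover have "hilbert_trivial_p p (\<lambda>n. (y n)^2 - 4) r"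
    by (rule trivial[OF Zp(2)]) (use E_yxz in blast)
  moreover have "hilbert_trivial_p p (\<lambda>n. (z n)^2 - 4) r"
    by (rule trivial[OF Zp(3)]) (use E_zyx in blast)
  ultimately show ?thesis using B_arg_p_cases[of p x y z] unfolding inv_p_def P_eq by auto
qed

lemma inv_p_eq_half:
  assumes P: "U_Zp_point p r v P" and "1 \<le> N"
    and unsolvable: "\<And>x y z. [markoff_form x y z = 4 + r * v^2] (mod int p ^ N) \<Longrightarrow>
        \<not> hilbert_solvable_mod (int p) N (x^2 - 4) r"
  shows "inv_p r p P = 1/2"
proof -
  obtain x y z where P_eq: "P = (x, y, z)" by (cases P)
  have nontrivial: "\<not> hilbert_trivial_p p (\<lambda>n. (t n)^2 - 4) r"
    if "[markoff_form (t N) u w = 4 + r * v^2] (mod int p ^ N)" for t u w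
    using unsolvable[OF that] by (intro not_hilbert_trivial_p_if_not_solvable_mod[OF \<open>1 \<le> N\<close>]) simp
  have E: "[markoff_form (x N) (y N) (z N) = 4 + r * v^2] (mod int p ^ N)"
    using P unfolding P_eq U_Zp_point_def by auto
  hence E_yxz: "[markoff_form (y N) (x N) (z N) = 4 + r * v^2] (mod int p ^ N)"
    and E_zyx: "[markoff_form (z N) (y N) (x N) = 4 + r * v^2] (mod int p ^ N)"
    by (simp_all add: algebra_simps)
  show ?thesis
    using B_arg_p_cases[of p x y z]
      nontrivial[of x, OF E] nontrivial[of y, OF E_yxz] nontrivial[of z, OF E_zyx]
    unfolding inv_p_def P_eq by auto
qed

lemma inv_R_eq_0:
  assumes r: "0 < r \<or> 4 + r * v^2 < 0" and P: "U_R_point r v P"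
  shows "inv_R r P = 0"
proof (cases "0 < r")
  case True
  hence "hilbert_trivial_R a r" for a
    unfolding hilbert_trivial_R_def
      by (intro exI[of _ 0] exI[of _ 1] exI[of _ "sqrt (of_int r)"]) simp
  thus ?thesis unfolding inv_R_def by simp
next
  case False
  obtain x y z where P_eq: "P = (x, y, z)" by (cases P)
  have "real_of_int (4 + r * v^2) < 0" using r False by linarith
  hence negative: "markoff_form x y z < 0" using P unfolding P_eq U_R_point_def by simp
  have "4 < x^2"
  proof (rule ccontr)
    assume "\<not> 4 < x^2"
    hence "0 \<le> (2 * y - x * z)^2 + (4 - x^2) * z^2 + 4 * x^2" by (intro add_nonneg_nonneg) auto
    also have "\<dots> = 4 * markoff_form x y z" by (simp add: power2_eq_square algebra_simps)
    finally show False using negative by simp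
  qed
  hence "hilbert_trivial_R (B_arg_R P) r"
    unfolding hilbert_trivial_R_def B_arg_R_def P_eq
    by (intro exI[of _ 1] exI[of _ 0] exI[of _ "sqrt (x^2 - 4)"]) simp
  thus ?thesis unfolding inv_R_def by simp
qed

lemma adelic_points_B_eq_empty:
  assumes q: "prime q"
    and real: "\<And>P. U_R_point r v P \<Longrightarrow> inv_R r P = 0"
    and at_q: "\<And>P. U_Zp_point q r v P \<Longrightarrow> inv_p r q P = 1/2"
    and elsewhere: "\<And>p P. prime p \<Longrightarrow> p \<noteq> q \<Longrightarrow> U_Zp_point p r v P \<Longrightarrow> inv_p r p P = 0"
  shows "adelic_points_B r v = {}"
proof -
  have "(Pinf, Pf) \<notin> adelic_points_B r v" for Pinf Pf
  proof
    assume "(Pinf, Pf) \<in> adelic_points_B r v"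
    hence R: "U_R_point r v Pinf" and Zp: "\<And>p. prime p \<Longrightarrow> U_Zp_point p r v (Pf p)"
      and sum: "inv_R r Pinf + (\<Sum>p\<in>{p. prime p \<and> inv_p r p (Pf p) \<noteq> 0}. inv_p r p (Pf p)) \<in> \<int>"
      unfolding adelic_points_B_def by auto
    have "{p. prime p \<and> inv_p r p (Pf p) \<noteq> 0} = {q}"
    proof
      show "{p. prime p \<and> inv_p r p (Pf p) \<noteq> 0} \<subseteq> {q}" using elsewhere Zp by blast
      show "{q} \<subseteq> {p. prime p \<and> inv_p r p (Pf p) \<noteq> 0}" using q at_q[OF Zp[OF q]] by simp
    qed
    hence "of_int 1 / of_int 2 \<in> (\<int> :: rat set)" using sum real[OF R] at_q[OF Zp[OF q]] by simp
    thus False using fraction_not_in_Ints[of 2 1] by simp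
  qed
  thus ?thesis by auto
qed

section \<open>Odd primes\<close>

lemma hilbert_solvable_mod_unit:
  fixes p a r :: int
  assumes p: "prime p" "odd p" and a: "\<not> p dvd a" and r: "\<not> p dvd r"
  shows "hilbert_solvable_mod p n a r"
proof -
  obtain X Y where XY: "[a * X^2 + r * Y^2 = 1] (mod p)"
    using diagonal_form_represents_one_mod_prime[OF p a r] by blast
  have not_dvd: "\<not> p dvd a * X^2 + r * Y^2"
    using XY p(1) by (simp add: cong_dvd_iff prime_int_iff)
  moreover have "[1^2 = a * X^2 + r * Y^2] (mod p)" using XY by (simp add: cong_sym)
  ultimately obtain Z where "[Z^2 = a * X^2 + r * Y^2] (mod p^n)"
    using square_root_mod_prime_power[OF p] by blast
  moreover have "\<not> (p dvd X \<and> p dvd Y)" using not_dvd by (auto simp: power2_eq_square)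
  ultimately show ?thesis unfolding hilbert_solvable_mod_def by (meson cong_sym)
qed

lemma hilbert_solvable_mod_QuadRes:
  fixes p a r :: int
  assumes p: "prime p" "odd p" and r: "\<not> p dvd r" and "QuadRes p r"
  shows "hilbert_solvable_mod p n a r"
proof -
  obtain s where "[s^2 = r] (mod p)" using \<open>QuadRes p r\<close> unfolding QuadRes_def by blast
  then obtain Z where "[Z^2 = r] (mod p^n)" using square_root_mod_prime_power[OF p _ r] by blast
  moreover have "\<not> p dvd 1" using p(1) by (simp add: prime_int_iff)
  ultimately show ?thesis unfolding hilbert_solvable_mod_def
    by (intro exI[of _ 0] exI[of _ 1] exI[of _ Z]) (simp add: cong_sym)
qed

lemma markoff_form_minus_4_eq:
  fixes e x y z :: int
  assumes "e \<in> {1, -1}"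
  shows "markoff_form x y z - 4 = (y - e * z)^2 + (x - 2 * e) * (x + 2 * e - y * z)"
  using assms by (auto simp: power2_eq_square algebra_simps)

lemma QuadRes_if_markoff_form_cong:
  fixes p r v x y z :: int
  assumes p: "prime p" and x: "p dvd x^2 - 4" and v: "\<not> p dvd v"
    and E: "[markoff_form x y z = 4 + r * v^2] (mod p)"
  shows "QuadRes p r"
proof -
  \<comment> \<open>x = \<plusminus>2 modulo p makes markoff_form x y z - 4 a square modulo p\<close>
  have "p dvd (x - 2) * (x + 2)" using x by (simp add: power2_eq_square algebra_simps)
  hence "p dvd x - 2 \<or> p dvd x + 2" using p by (simp add: prime_dvd_mult_iff)
  then obtain e :: int where e: "e \<in> {1, -1}" "p dvd x - 2 * e"
  proof
    assume "p dvd x - 2" thus ?thesis using that[of 1] by simp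
  next
    assume "p dvd x + 2" thus ?thesis using that[of "-1"] by simp
  qed
  have "[markoff_form x y z - 4 = (y - e * z)^2] (mod p)"
    using e by (simp add: markoff_form_minus_4_eq cong_iff_dvd_diff)
  moreover have "[markoff_form x y z - 4 = r * v^2] (mod p)" using cong_diff[OF E cong_refl[of 4]]
    by simp
  ultimately have w: "[(y - e * z)^2 = r * v^2] (mod p)" using cong_sym cong_trans by blast
  obtain u where u: "[v * u = 1] (mod p)"
    using cong_solve_coprime_int[of v p] prime_imp_coprime[OF p v] by (auto simp: coprime_commute)
  have "[((y - e * z) * u)^2 = r * (v * u)^2] (mod p)"
    using cong_mult[OF w cong_refl[of "u^2"]] by (simp add: power_mult_distrib mult.assoc)
  also have "[r * (v * u)^2 = r * 1^2] (mod p)" by (intro cong_mult cong_pow u cong_refl)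
  finally show ?thesis unfolding QuadRes_def by auto
qed

lemma hilbert_solvable_mod_odd_prime:
  fixes p r v x y z :: int
  assumes p: "prime p" "odd p" and r: "\<not> p dvd r" and QuadRes: "p dvd v \<Longrightarrow> QuadRes p r"
    and "1 \<le> n" and E: "[markoff_form x y z = 4 + r * v^2] (mod p^n)"
  shows "hilbert_solvable_mod p n (x^2 - 4) r"
proof (cases "p dvd x^2 - 4")
  case False
  thus ?thesis using hilbert_solvable_mod_unit[OF p _ r] by blast
next
  case True
  have "[markoff_form x y z = 4 + r * v^2] (mod p)"
    by (rule cong_dvd_modulus[OF E]) (use \<open>1 \<le> n\<close> in \<open>simp add: dvd_power\<close>)
  hence "QuadRes p r" using QuadRes QuadRes_if_markoff_form_cong[OF p(1) True] by blast
  thus ?thesis using hilbert_solvable_mod_QuadRes[OF p r] by blast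
qed

lemma inv_p_odd_eq_0:
  assumes "prime p" "odd p" "\<not> int p dvd r" "int p dvd v \<Longrightarrow> QuadRes (int p) r"
    and "U_Zp_point p r v P"
  shows "inv_p r p P = 0"
  by (rule inv_p_eq_0[OF assms(1,5), of 1])
    (use assms hilbert_solvable_mod_odd_prime[of "int p" r v] in auto)

section \<open>The prime 2\<close>

lemma hilbert_solvable_mod_of_norms:
  fixes p a b r w t c d :: int
  assumes b: "\<not> p dvd b" and ab: "[a * b = w^2 - r * t^2] (mod p^n)"
    and "[b = c^2 - r * d^2] (mod p^n)"
  shows "hilbert_solvable_mod p n a r"
proof -
  \<comment> \<open>Brahmagupta's identity: the norms from Z[sqrt r] are closed under products\<close>
  have "[a * b * b = (w^2 - r * t^2) * (c^2 - r * d^2)] (mod p^n)" using assms by (intro cong_mult)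
  also have "(w^2 - r * t^2) * (c^2 - r * d^2) = (w * c + r * t * d)^2 - r * (w * d + t * c)^2"
    by (simp add: power2_eq_square algebra_simps)
  finally have "[a * b^2 + r * (w * d + t * c)^2 = (w * c + r * t * d)^2] (mod p^n)"
    by (simp add: cong_iff_dvd_diff power2_eq_square algebra_simps)
  thus ?thesis using b unfolding hilbert_solvable_mod_def by blast
qed

lemma markoff_form_norm_identity:
  fixes x y z :: int
  shows "(x^2 - 4) * (z^2 - 4) = (2 * y - x * z)^2 - 4 * (markoff_form x y z - 4)"
  by (simp add: power2_eq_square algebra_simps)

lemma hilbert_solvable_mod_two:
  fixes r d v x y z :: int
  assumes rd: "[r * d^2 = 4] (mod 8)" and E: "[markoff_form x y z = 4 + r * v^2] (mod 2^n)"
    and odd: "odd x \<or> odd y \<or> odd z"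
  shows "hilbert_solvable_mod 2 n (x^2 - 4) r"
proof -
  \<comment> \<open>for odd t, t^2 - 4 is a unit norm: t^2 - 4 + r d^2 = 1 (mod 8) is a 2-adic square\<close>
  have unit_norm: "\<exists>c. [t^2 - 4 = c^2 - r * d^2] (mod 2^n)" if "odd t" for t
  proof -
    have "[t^2 - 4 + r * d^2 = 1 - 4 + 4] (mod 8)"
      using odd_square_cong_1_mod_8[OF that] rd by (intro cong_add cong_diff cong_refl)
    then obtain c where "[c^2 = t^2 - 4 + r * d^2] (mod 2^n)" using square_root_mod_power_of_two
      by auto
    hence "[c^2 - r * d^2 = t^2 - 4 + r * d^2 - r * d^2] (mod 2^n)" by (intro cong_diff cong_refl)
    thus ?thesis by (auto intro: cong_sym)
  qed
  have E': "[4 * (markoff_form x y z - 4) = r * (2 * v)^2] (mod 2^n)"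
    using cong_mult[OF cong_refl[of 4] cong_diff[OF E cong_refl[of 4]]]
    by (simp add: power_mult_distrib mult.left_commute)
  consider "odd x" | "odd z" | "odd y" using odd by blast
  thus ?thesis
  proof cases
    case 1
    obtain c where c: "[x^2 - 4 = c^2 - r * d^2] (mod 2^n)" using unit_norm[OF 1] by blast
    show ?thesis
    proof (rule hilbert_solvable_mod_of_norms[OF _ _ c])
      show "\<not> 2 dvd x^2 - 4" using 1 by simp
      show "[(x^2 - 4) * (x^2 - 4) = (x^2 - 4)^2 - r * 0^2] (mod 2^n)"
        by (simp add: power2_eq_square)
    qed
  next
    case 2
    have norm: "[(x^2 - 4) * (z^2 - 4) = (2 * y - x * z)^2 - r * (2 * v)^2] (mod 2^n)"
      unfolding markoff_form_norm_identity[where y = y] by (rule cong_diff[OF cong_refl E'])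
    obtain c where c: "[z^2 - 4 = c^2 - r * d^2] (mod 2^n)" using unit_norm[OF 2] by blast
    show ?thesis by (rule hilbert_solvable_mod_of_norms[OF _ norm c]) (use 2 in simp)
  next
    case 3
    have "(x^2 - 4) * (y^2 - 4) = (2 * z - x * y)^2 - 4 * (markoff_form x y z - 4)"
      using markoff_form_norm_identity[where y = z and z = y] by (simp add: algebra_simps)
    hence norm: "[(x^2 - 4) * (y^2 - 4) = (2 * z - x * y)^2 - r * (2 * v)^2] (mod 2^n)"
      using E' by (simp add: cong_diff cong_refl)
    obtain c where c: "[y^2 - 4 = c^2 - r * d^2] (mod 2^n)" using unit_norm[OF 3] by blast
    show ?thesis by (rule hilbert_solvable_mod_of_norms[OF _ norm c]) (use 3 in simp)
  qed
qed

lemma markoff_form_double: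
  fixes a b c :: int
  shows "markoff_form (2 * a) (2 * b) (2 * c) = 4 * (a^2 + b^2 + c^2 - 2 * (a * b * c))"
  by (simp add: power2_eq_square algebra_simps)

lemma markoff_form_double_mod_cong:
  fixes a b c m :: int
  assumes "even m"
  shows "[markoff_form (2 * (a mod m)) (2 * (b mod m)) (2 * (c mod m))
        = markoff_form (2 * a) (2 * b) (2 * c)] (mod 4 * (2 * m))"
proof -
  have "[(a mod m) * (b mod m) * (c mod m) = a * b * c] (mod m)" by (intro cong_mult) simp_all
  hence "[2 * ((a mod m) * (b mod m) * (c mod m)) = 2 * (a * b * c)] (mod 2 * m)"
    by (rule cong_cmult_leftI)
  hence "[(a mod m)^2 + (b mod m)^2 + (c mod m)^2 - 2 * ((a mod m) * (b mod m) * (c mod m))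
      = a^2 + b^2 + c^2 - 2 * (a * b * c)] (mod 2 * m)"
    using cong_square_mod_even[OF assms] by (intro cong_add cong_diff)
  thus ?thesis unfolding markoff_form_double by (rule cong_cmult_leftI)
qed

lemma markoff_form_double_mod_32: "markoff_form (2 * a) (2 * b) (2 * c) mod 32 \<noteq> (24::int)"
proof -
  have "\<forall>a\<in>set [0..3]. \<forall>b\<in>set [0..3]. \<forall>c\<in>set [0..3::int].
      markoff_form (2 * a) (2 * b) (2 * c) mod 32 \<noteq> 24"
    by code_simp
  moreover have "W mod 4 \<in> set [0..3]" for W :: int by simp
  ultimately show ?thesis using markoff_form_double_mod_cong[of 4 a b c] by (auto simp: cong_def)
qed

lemma markoff_form_double_mod_128: "markoff_form (2 * a) (2 * b) (2 * c) mod 128 \<noteq> (48::int)"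
proof -
  have "\<forall>a\<in>set [0..15]. \<forall>b\<in>set [0..15]. \<forall>c\<in>set [0..15::int].
      markoff_form (2 * a) (2 * b) (2 * c) mod 128 \<noteq> 48"
    by code_simp
  moreover have "W mod 16 \<in> set [0..15]" for W :: int by simp
  ultimately show ?thesis using markoff_form_double_mod_cong[of 16 a b c] by (auto simp: cong_def)
qed

lemma markoff_form_two_adic_odd_coordinate:
  fixes r v x y z :: int
  assumes r: "r \<in> {-3, 12, -12}" and v: "odd v" and v12: "r = 12 \<Longrightarrow> [v^2 = 25] (mod 32)"
    and E: "[markoff_form x y z = 4 + r * v^2] (mod 2^7)"
  shows "odd x \<or> odd y \<or> odd z"
proof (rule ccontr)
  assume "\<not> ?thesis"
  then obtain a b c where xyz: "x = 2 * a" "y = 2 * b" "z = 2 * c" by (auto elim!: evenE)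
  consider "r = -3" | "r = -12" | "r = 12" using r by auto
  thus False
  proof cases
    case 1
    have "[markoff_form x y z = 4 + r * v^2] (mod 2)" using E by (rule cong_dvd_modulus) simp
    thus False using 1 v unfolding xyz by (simp add: cong_iff_dvd_diff)
  next
    case 2
    obtain k where "v^2 = 1 + 8 * k" using odd_square_cong_1_mod_8[OF v]
      by (metis cong_iff_lin cong_sym)
    hence rv: "4 + r * v^2 = 24 + 32 * (-1 - 3 * k)" using 2 by simp
    have "[markoff_form x y z = 4 + r * v^2] (mod 32)" using E by (rule cong_dvd_modulus) simp
    hence "markoff_form x y z mod 32 = (24 + 32 * (-1 - 3 * k)) mod 32" unfolding cong_def rv .
    also have "\<dots> = 24" by (simp only: mod_mult_self2) simp
    finally show False using markoff_form_double_mod_32[of a b c] unfolding xyz by simp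
  next
    case 3
    obtain k where "v^2 = 25 + 32 * k" using v12[OF 3] by (metis cong_iff_lin cong_sym)
    hence rv: "4 + r * v^2 = 48 + 128 * (2 + 3 * k)" using 3 by simp
    have "markoff_form x y z mod 128 = (48 + 128 * (2 + 3 * k)) mod 128"
      using E unfolding cong_def rv by simp
    also have "\<dots> = 48" by (simp only: mod_mult_self2) simp
    finally show False using markoff_form_double_mod_128[of a b c] unfolding xyz by simp
  qed
qed

lemma inv_p_two_eq_0:
  assumes r: "r \<in> {-3, 12, -12}" and v: "odd v" "r = 12 \<Longrightarrow> [v^2 = 25] (mod 32)"
    and P: "U_Zp_point 2 r v P"
  shows "inv_p r 2 P = 0"
proof (rule inv_p_eq_0[OF _ P, of 7])
  obtain d :: int where d: "[r * d^2 = 4] (mod 8)"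
  proof
    show "[r * (if r = -3 then 2 else 1)^2 = 4] (mod 8)" using r by (auto simp: cong_def)
  qed
  show "hilbert_solvable_mod (int 2) n (x^2 - 4) r"
    if "7 \<le> n" "[markoff_form x y z = 4 + r * v^2] (mod int 2 ^ n)" for n x y z
  proof -
    have "[markoff_form x y z = 4 + r * v^2] (mod 2^7)"
      using that(2)
        by (rule cong_dvd_modulus) (use le_imp_power_dvd[OF that(1), of "2::int"] in simp)
    hence "odd x \<or> odd y \<or> odd z" using markoff_form_two_adic_odd_coordinate r v by blast
    thus ?thesis using hilbert_solvable_mod_two[OF d] that(2) by simp
  qed
qed simp

lemma not_hilbert_solvable_mod_8:
  assumes "r \<in> {2, -2}"
  shows "\<not> hilbert_solvable_mod 2 3 5 r"
proof (rule not_hilbert_solvable_mod_by_residues[where m = 4])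
  show "\<forall>X\<in>set [0..4 - 1]. \<forall>Y\<in>set [0..4 - 1]. \<forall>Z\<in>set [0..4 - 1].
      (5 * X^2 + r * Y^2 - Z^2) mod 2^3 = 0 \<longrightarrow> 2 dvd X \<and> 2 dvd Y \<and> 2 dvd Z"
    using assms by (elim insertE singletonE emptyE; hypsubst; code_simp)
qed (use cong_square_mod_even[of 4] in simp_all)

lemma not_hilbert_solvable_mod_32:
  assumes "r \<in> {2, -2}"
  shows "\<not> hilbert_solvable_mod 2 5 (4 + 4 * r) r"
proof (rule not_hilbert_solvable_mod_by_residues[where m = 16])
  show "\<forall>X\<in>set [0..16 - 1]. \<forall>Y\<in>set [0..16 - 1]. \<forall>Z\<in>set [0..16 - 1].
      ((4 + 4 * r) * X^2 + r * Y^2 - Z^2) mod 2^5 = 0 \<longrightarrow> 2 dvd X \<and> 2 dvd Y \<and> 2 dvd Z"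
    using assms by (elim insertE singletonE emptyE; hypsubst; code_simp)
qed (use cong_square_mod_even[of 16] in simp_all)

lemma markoff_form_mod_16_cases:
  fixes r x y z :: int
  assumes r: "r \<in> {2, -2}" and E: "[markoff_form x y z = 4 + r] (mod 16)"
  shows "odd x \<or> [x^2 - 4 = 4 + 4 * r] (mod 32)"
proof -
  have "\<forall>a\<in>set [0..15]. \<forall>b\<in>set [0..15]. \<forall>c\<in>set [0..15::int].
      markoff_form a b c mod 16 = (4 + r) mod 16 \<longrightarrow> odd a \<or> (a^2 - 4) mod 32 = (4 + 4 * r) mod 32"
    using r by (elim insertE singletonE emptyE; hypsubst; code_simp)
  moreover have "markoff_form (x mod 16) (y mod 16) (z mod 16) mod 16 = (4 + r) mod 16"
    using cong_trans[OF markoff_form_mod_cong E] unfolding cong_def .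
  moreover have residue: "W mod 16 \<in> set [0..15]" for W :: int by simp
  ultimately have "odd (x mod 16) \<or> ((x mod 16)^2 - 4) mod 32 = (4 + 4 * r) mod 32"
    using residue by blast
  moreover have "[(x mod 16)^2 - 4 = x^2 - 4] (mod 32)"
    using cong_square_mod_even[of 16 x] by (intro cong_diff cong_refl) simp_all
  moreover have "even (x mod 16) \<longleftrightarrow> even x" by (simp add: dvd_mod_iff)
  ultimately show ?thesis by (auto simp: cong_def)
qed

lemma not_hilbert_solvable_mod_two_obstruction:
  fixes r v x y z :: int
  assumes r: "r \<in> {2, -2}" and v: "odd v" and E: "[markoff_form x y z = 4 + r * v^2] (mod 2^5)"
  shows "\<not> hilbert_solvable_mod 2 5 (x^2 - 4) r"
proof -
  obtain k where "v^2 = 1 + 8 * k" using odd_square_cong_1_mod_8[OF v]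
    by (metis cong_iff_lin cong_sym)
  hence "r * v^2 = r + 16 * (r div 2 * k)" using r by auto
  hence "[4 + r * v^2 = 4 + r] (mod 16)" by (simp add: cong_iff_dvd_diff)
  moreover have "[markoff_form x y z = 4 + r * v^2] (mod 16)" using E
    by (rule cong_dvd_modulus) simp
  ultimately have "[markoff_form x y z = 4 + r] (mod 16)" using cong_trans by blast
  hence "odd x \<or> [x^2 - 4 = 4 + 4 * r] (mod 2^5)" using markoff_form_mod_16_cases[OF r] by simp
  thus ?thesis
  proof
    assume "odd x"
    hence "[x^2 - 4 = 1 - 4] (mod 8)" by (intro cong_diff cong_refl odd_square_cong_1_mod_8)
    hence "[x^2 - 4 = 5] (mod 2^3)" by (simp add: cong_def)
    hence "\<not> hilbert_solvable_mod 2 3 (x^2 - 4) r"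
      using not_hilbert_solvable_mod_8[OF r] hilbert_solvable_mod_cong by blast
    thus ?thesis using hilbert_solvable_mod_mono[of 2 5 "x^2 - 4" r 3] by auto
  qed (use not_hilbert_solvable_mod_32[OF r] hilbert_solvable_mod_cong in blast)
qed

lemma inv_p_two_eq_half:
  assumes "r \<in> {2, -2}" "odd v" "U_Zp_point 2 r v P"
  shows "inv_p r 2 P = 1/2"
  by (rule inv_p_eq_half[OF assms(3), of 5])
    (use not_hilbert_solvable_mod_two_obstruction[OF assms(1,2)] in simp_all)

section \<open>The prime 3\<close>

lemma markoff_form_mod_9_cases:
  fixes r x y z :: int
  assumes r: "r \<in> {-3, 12, -12}" and E: "[markoff_form x y z = 4 + r] (mod 9)"
  shows "(x^2 - 4) mod 9 \<in> (if r = 12 then {3, 5} else {5, 6})"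
proof -
  have "\<forall>a\<in>set [0..8]. \<forall>b\<in>set [0..8]. \<forall>c\<in>set [0..8::int].
      markoff_form a b c mod 9 = (4 + r) mod 9 \<longrightarrow>
      (a^2 - 4) mod 9 \<in> (if r = 12 then {3, 5} else {5, 6})"
    using r by (elim insertE singletonE emptyE; hypsubst; code_simp)
  moreover have "markoff_form (x mod 9) (y mod 9) (z mod 9) mod 9 = (4 + r) mod 9"
    using cong_trans[OF markoff_form_mod_cong E] unfolding cong_def .
  moreover have residue: "W mod 9 \<in> set [0..8]" for W :: int by simp
  ultimately have "((x mod 9)^2 - 4) mod 9 \<in> (if r = 12 then {3, 5} else {5, 6})"
    using residue by blast
  moreover have "[(x mod 9)^2 - 4 = x^2 - 4] (mod 9)" by (intro cong_diff cong_pow cong_refl) simp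
  ultimately show ?thesis unfolding cong_def by simp
qed

lemma not_hilbert_solvable_mod_9:
  assumes "r \<in> {-3, 12, -12}" "a \<in> (if r = 12 then {3, 5} else {5, 6})"
  shows "\<not> hilbert_solvable_mod 3 2 a r"
proof (rule not_hilbert_solvable_mod_by_residues[where m = 9])
  have check: "\<forall>r\<in>{-3, 12, -12}. \<forall>a\<in>(if r = 12 then {3, 5} else {5, 6}).
      \<forall>X\<in>set [0..9 - 1]. \<forall>Y\<in>set [0..9 - 1]. \<forall>Z\<in>set [0..9 - 1::int].
      (a * X^2 + r * Y^2 - Z^2) mod 3^2 = 0 \<longrightarrow> 3 dvd X \<and> 3 dvd Y \<and> 3 dvd Z"
    by code_simp
  show "\<forall>X\<in>set [0..9 - 1]. \<forall>Y\<in>set [0..9 - 1]. \<forall>Z\<in>set [0..9 - 1].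
      (a * X^2 + r * Y^2 - Z^2) mod 3^2 = 0 \<longrightarrow> 3 dvd X \<and> 3 dvd Y \<and> 3 dvd Z"
    using bspec[OF bspec[OF check assms(1)] assms(2)] .
qed (simp_all add: cong_pow)

lemma not_hilbert_solvable_mod_three_obstruction:
  fixes r v x y z :: int
  assumes r: "r \<in> {-3, 12, -12}" and v: "\<not> 3 dvd v"
    and E: "[markoff_form x y z = 4 + r * v^2] (mod 3^2)"
  shows "\<not> hilbert_solvable_mod 3 2 (x^2 - 4) r"
proof -
  have "v mod 3 = 1 \<or> v mod 3 = 2" using v by presburger
  hence "3 dvd v^2 - 1" by (auto simp: mod_eq_dvd_iff[symmetric] power_mod[of v 3 2, symmetric])
  moreover have "3 dvd r" using r by auto
  ultimately have "3 * 3 dvd r * (v^2 - 1)" by (rule mult_dvd_mono[rotated])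
  hence "[4 + r * v^2 = 4 + r] (mod 9)" by (simp add: cong_iff_dvd_diff right_diff_distrib)
  moreover have "[markoff_form x y z = 4 + r * v^2] (mod 9)" using E by simp
  ultimately have "(x^2 - 4) mod 9 \<in> (if r = 12 then {3, 5} else {5, 6})"
    using markoff_form_mod_9_cases[OF r] cong_trans cong_sym by blast
  moreover have "[(x^2 - 4) mod 9 = x^2 - 4] (mod 3^2)" by simp
  ultimately show ?thesis using not_hilbert_solvable_mod_9[OF r] hilbert_solvable_mod_cong by blast
qed

lemma inv_p_three_eq_half:
  assumes "r \<in> {-3, 12, -12}" "\<not> 3 dvd v" "U_Zp_point 3 r v P"
  shows "inv_p r 3 P = 1/2"
  by (rule inv_p_eq_half[OF assms(3), of 2])
    (use not_hilbert_solvable_mod_three_obstruction[OF assms(1,2)] in simp_all)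

definition obstruction_prime :: "int \<Rightarrow> nat" where
  "obstruction_prime r = (if r \<in> {2, -2} then 2 else 3)"

lemma inv_p_obstruction_prime_eq_half:
  assumes "r \<in> {2, -2, -3, 12, -12}" "odd v" "r \<in> {-3, 12, -12} \<Longrightarrow> \<not> 3 dvd v"
    and "U_Zp_point (obstruction_prime r) r v P"
  shows "inv_p r (obstruction_prime r) P = 1/2"
proof (cases "r \<in> {2, -2}")
  case True
  thus ?thesis using inv_p_two_eq_half[OF True assms(2)] assms(4) unfolding obstruction_prime_def
    by simp
next
  case False
  hence "r \<in> {-3, 12, -12}" using assms(1) by auto
  thus ?thesis using inv_p_three_eq_half[OF _ assms(3)] assms(4) False
    unfolding obstruction_prime_def by simp
qed

lemma prime_dvd_divisor_of_12:
  assumes "prime p" "int p dvd r" "r dvd 12"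
  shows "p = 2 \<or> p = 3"
proof -
  have "int p dvd int (2 * 2 * 3)" using assms(2,3) by (simp add: dvd_trans)
  hence "p dvd 2 \<or> p dvd 3"
    by (simp only: int_dvd_int_iff prime_dvd_mult_iff[OF assms(1)] disj_absorb)
  hence "p \<le> 3" using dvd_imp_le[of p 2] dvd_imp_le[of p 3] by auto
  moreover have "p \<noteq> 0" "p \<noteq> 1" using assms(1) by auto
  ultimately show ?thesis by auto
qed

lemma inv_p_eq_0_away_from_obstruction_prime:
  assumes r: "r \<in> {2, -2, -3, 12, -12}" and v: "odd v" "r = 12 \<Longrightarrow> [v^2 = 25] (mod 32)"
    and QuadRes: "\<And>q. prime q \<Longrightarrow> q dvd v \<Longrightarrow> QuadRes q r"
    and p: "prime p" "p \<noteq> obstruction_prime r" and P: "U_Zp_point p r v P"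
  shows "inv_p r p P = 0"
proof (cases "p = 2")
  case True
  hence "r \<in> {-3, 12, -12}" using p(2) r unfolding obstruction_prime_def by auto
  thus ?thesis using inv_p_two_eq_0 v P True by blast
next
  case False
  hence "odd p" using prime_odd_nat[OF p(1)] prime_ge_2_nat[OF p(1)] by simp
  moreover have "\<not> int p dvd r"
    using prime_dvd_divisor_of_12[OF p(1), of r] False p(2) r unfolding obstruction_prime_def
    by auto
  moreover have "int p dvd v \<Longrightarrow> QuadRes (int p) r" using QuadRes[of "int p"] p(1) by simp
  ultimately show ?thesis using inv_p_odd_eq_0[OF p(1) _ _ _ P] by blast
qed

theorem proposition5p6:
  fixes r v :: int
  assumes hr: "r \<in> {2, -2, -3, 12, -12}"
    and hv0: "v \<noteq> 0"
    and h2: "r = 2 \<Longrightarrow> \<forall>p\<in>prime_factors v. p mod 8 \<in> {1, 7}"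
    and h12: "r = 12 \<Longrightarrow> (\<forall>p\<in>prime_factors v. p mod 12 \<in> {1, 11}) \<and> [v^2 = 25] (mod 32)"
    and hm2: "r = -2 \<Longrightarrow> \<forall>p\<in>prime_factors v. p mod 8 \<in> {1, 3}"
    and hm3: "r = -3 \<Longrightarrow> \<forall>p\<in>prime_factors v. p mod 3 = 1"
    and hm12: "r = -12 \<Longrightarrow> \<forall>p\<in>prime_factors v. p mod 3 = 1"
    and hv1: "r \<in> {-2, -3} \<Longrightarrow> v \<noteq> 1 \<and> v \<noteq> -1"
  shows "adelic_points_B r v = {}"
proof -
  have admissible: "admissible_prime r p" if "prime p" "p dvd v" for p
    using that hv0 h2 hm2 h12 hm3 hm12 unfolding admissible_prime_def
      by (auto simp: in_prime_factors_iff)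
  have "odd v" using admissible[of 2] hr unfolding admissible_prime_def by auto
  have not_3_dvd: "\<not> 3 dvd v" if "r \<in> {-3, 12, -12}"
    using admissible[of 3] that unfolding admissible_prime_def by auto
  show ?thesis
  proof (rule adelic_points_B_eq_empty[of "obstruction_prime r"])
    show "inv_R r P = 0" if "U_R_point r v P" for P
      using that hr hv0 hv1 abs_le_square_iff[of 1 v] abs_le_square_iff[of 2 v]
      by (intro inv_R_eq_0) auto
    show "inv_p r (obstruction_prime r) P = 1/2" if "U_Zp_point (obstruction_prime r) r v P" for P
      using inv_p_obstruction_prime_eq_half[OF hr \<open>odd v\<close> not_3_dvd that] .
    show "inv_p r p P = 0" if "prime p" "p \<noteq> obstruction_prime r" "U_Zp_point p r v P" for p P
      using inv_p_eq_0_away_from_obstruction_prime[OF hr \<open>odd v\<close> _ _ that] h12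
        QuadRes_if_admissible_prime[OF _ hr admissible] by blast
  qed (simp add: obstruction_prime_def)
qed

end
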